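(* For every even $n\ge2$ there exists a unique $w_n\in\mathcal F_n$ with $\tau_{\mathbf m}(w_n)=\{s_{n/2}\}$. Moreover, for $n\ge4$, $w_n=\nu_{n/2}(\rho(w_{n-2}))$.
   Context: $s_i=(i,i+1)$; permutations compose right to left. For even $m$, $\mathcal F_m$ is the set of fixed-point-free involutions of $S_m$ with conjugation action, height $\ell/2$, Bruhat order the weakest partial order with $z\le tzt$ for transpositions $t$ with $\ell(z)\le\ell(tzt)$, and $\tau_{\mathbf m}(z)=\{s_i:s_izs_i\le z\}$. Regard $\mathcal F_{n-2}\subset S_n$; $w_0$ longest element of $S_n$; $\rho(z)=w_0zs_{n-1}w_0$; $Y_1=\rho(\mathcal F_{n-2})$; $\sigma_j=s_j\cdots s_1$; $\nu_j(x)=\sigma_jx\sigma_j^{-1}$ for $x\in Y_1$. *)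

theory Defs
  imports "HOL-Combinatorics.Combinatorics"
begin

(* Permutations of S_m are maps nat => nat permuting {1..m} (identity elsewhere);
   composition is right to left: (p o q) x = p (q x). *)

definition simple :: "nat \<Rightarrow> nat \<Rightarrow> nat" where
  "simple i = transpose i (Suc i)"

(* Coxeter length = number of inversions *)
definition len :: "nat \<Rightarrow> (nat \<Rightarrow> nat) \<Rightarrow> nat" where
  "len m w = card {(i, j). 1 \<le> i \<and> i < j \<and> j \<le> m \<and> w j < w i}"

definition FPF :: "nat \<Rightarrow> (nat \<Rightarrow> nat) set" where
  "FPF m = {z. z permutes {1..m} \<and> z \<circ> z = id \<and> (\<forall>i\<in>{1..m}. z i \<noteq> i)}"

definition bruhat_step :: "nat \<Rightarrow> (nat \<Rightarrow> nat) \<Rightarrow> (nat \<Rightarrow> nat) \<Rightarrow> bool" where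
  "bruhat_step m z y \<longleftrightarrow> z \<in> FPF m \<and>
     (\<exists>a b. 1 \<le> a \<and> a < b \<and> b \<le> m \<and> y = transpose a b \<circ> z \<circ> transpose a b
            \<and> len m z \<le> len m y)"

definition bruhat_le :: "nat \<Rightarrow> (nat \<Rightarrow> nat) \<Rightarrow> (nat \<Rightarrow> nat) \<Rightarrow> bool" where
  "bruhat_le m z y \<longleftrightarrow> z \<in> FPF m \<and> y \<in> FPF m \<and> (bruhat_step m)\<^sup>*\<^sup>* z y"

definition tau :: "nat \<Rightarrow> (nat \<Rightarrow> nat) \<Rightarrow> (nat \<Rightarrow> nat) set" where
  "tau m z = {simple i | i. 1 \<le> i \<and> i < m \<and> bruhat_le m (simple i \<circ> z \<circ> simple i) z}"

definition w0 :: "nat \<Rightarrow> nat \<Rightarrow> nat" where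
  "w0 n = (\<lambda>i. if 1 \<le> i \<and> i \<le> n then n + 1 - i else i)"

definition rho :: "nat \<Rightarrow> (nat \<Rightarrow> nat) \<Rightarrow> (nat \<Rightarrow> nat)" where
  "rho n z = w0 n \<circ> z \<circ> simple (n - 1) \<circ> w0 n"

fun sigma :: "nat \<Rightarrow> nat \<Rightarrow> nat" where
  "sigma 0 = id"
| "sigma (Suc j) = simple (Suc j) \<circ> sigma j"

definition nu :: "nat \<Rightarrow> (nat \<Rightarrow> nat) \<Rightarrow> (nat \<Rightarrow> nat)" where
  "nu j x = sigma j \<circ> x \<circ> inv (sigma j)"

end

theory Submission
  imports Defs
begin

text \<open>
For a fixed-point-free involution \<open>z\<close>, conjugating by \<open>s\<^sub>i\<close> does not increase the length when
\<open>i\<close> is a descent of \<open>z\<close> and strictly increases it otherwise; since Bruhat steps never decrease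
the length, \<open>\<tau>\<^sub>m(z)\<close> is exactly the set of \<open>s\<^sub>i\<close> with \<open>i\<close> a descent of \<open>z\<close>. An involution
of \<open>{1..2k}\<close> without fixed points whose only descent is \<open>k\<close> is increasing on \<open>{1..k}\<close>, so it
cannot pair two points of \<open>{1..k}\<close>; hence it is \<open>x \<leftrightarrow> x + k\<close>. For the recursion, \<open>\<nu>\<^sub>k \<circ> \<rho>\<close>
preserves fixed-point-free involutions, and a direct computation shows that
\<open>\<nu>\<^sub>k(\<rho>(w\<^bsub>2k-2\<^esub>))\<close> sends \<open>a \<in> {1..k}\<close> to \<open>a + k\<close>.
\<close>

lemma permutes_involutionI:
  assumes "\<And>x. f (f x) = x" "\<And>x. x \<notin> S \<Longrightarrow> f x = x"
  shows "f permutes S"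
  unfolding permutes_def
proof (intro conjI allI impI)
  fix y show "\<exists>!x. f x = y"
    by (rule ex1I[of _ "f y"]) (metis assms(1))+
qed (use assms(2) in blast)

lemma simple_apply: "simple i x = (if x = i then Suc i else if x = Suc i then i else x)"
  by (simp add: simple_def transpose_def)

lemma simple_comp_simple [simp]: "simple i \<circ> simple i = id"
  by (simp add: simple_def)

lemma simple_simple_apply [simp]: "simple i (simple i x) = x"
  by (simp add: simple_def)

lemma inj_simple: "inj (simple i)"
  by (simp add: simple_def)

lemma simple_permutes: "1 \<le> i \<Longrightarrow> i < m \<Longrightarrow> simple i permutes {1..m}"
  unfolding simple_def by (intro permutes_swap_id) auto

lemma inj_simple_index: "inj simple"
proof
  fix i j assume "simple i = simple j"
  then have "simple i i = simple j i" by simp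
  then show "i = j" by (simp add: simple_apply split: if_splits)
qed

definition inversions :: "nat \<Rightarrow> (nat \<Rightarrow> nat) \<Rightarrow> (nat \<times> nat) set" where
  "inversions m p = {(i, j). 1 \<le> i \<and> i < j \<and> j \<le> m \<and> p j < p i}"

lemma len_eq_card_inversions: "len m p = card (inversions m p)"
  by (simp add: len_def inversions_def)

lemma finite_inversions [simp]: "finite (inversions m p)"
  by (rule finite_subset[of _ "{1..m} \<times> {1..m}"]) (auto simp: inversions_def)

lemma len_comp_simple_less:
  assumes "1 \<le> i" "i < m" "p (Suc i) < p i"
  shows "len m (p \<circ> simple i) < len m p"
proof -
  let ?swap = "map_prod (simple i) (simple i)"
  have "inj_on ?swap (inversions m (p \<circ> simple i))"
    using prod.inj_map[OF inj_simple inj_simple] by (rule inj_on_subset) simp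
  moreover have "?swap ` inversions m (p \<circ> simple i) \<subset> inversions m p"
  proof
    show "?swap ` inversions m (p \<circ> simple i) \<subseteq> inversions m p"
    proof (rule image_subsetI)
      fix ab assume "ab \<in> inversions m (p \<circ> simple i)"
      then obtain a b where ab: "ab = (a, b)" "1 \<le> a" "a < b" "b \<le> m"
        and inv: "p (simple i b) < p (simple i a)"
        by (auto simp: inversions_def)
      have "(a, b) \<noteq> (i, Suc i)"
        using inv assms(3) by (auto simp: simple_apply)
      then have "1 \<le> simple i a" "simple i a < simple i b" "simple i b \<le> m"
        using ab assms(1,2) by (auto simp: simple_apply)
      then show "?swap ab \<in> inversions m p"
        using ab inv by (simp add: inversions_def)
    qed
    have "(i, Suc i) \<notin> ?swap ` inversions m (p \<circ> simple i)"
    proof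
      assume "(i, Suc i) \<in> ?swap ` inversions m (p \<circ> simple i)"
      then obtain a b where ab: "(a, b) \<in> inversions m (p \<circ> simple i)"
        and "simple i a = i" "simple i b = Suc i"
        by auto
      then have "a = Suc i" "b = i"
        by (metis simple_simple_apply simple_apply)+
      with ab show False
        by (simp add: inversions_def)
    qed
    moreover have "(i, Suc i) \<in> inversions m p"
      using assms by (simp add: inversions_def)
    ultimately show "?swap ` inversions m (p \<circ> simple i) \<noteq> inversions m p"
      by blast
  qed
  ultimately have "card (inversions m (p \<circ> simple i)) < card (inversions m p)"
    by (metis card_image psubset_card_mono finite_inversions)
  then show ?thesis
    by (simp add: len_eq_card_inversions)
qed

lemma len_simple_comp_le:
  assumes "inj q"
  shows "len m (simple i \<circ> q) \<le> Suc (len m q)"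
proof -
  let ?new = "(inv q i, inv q (Suc i))"
  have "inversions m (simple i \<circ> q) \<subseteq> insert ?new (inversions m q)"
  proof
    fix ab assume ab: "ab \<in> inversions m (simple i \<circ> q)"
    then obtain a b where [simp]: "ab = (a, b)" and "a < b" "simple i (q b) < simple i (q a)"
      by (auto simp: inversions_def)
    moreover have "q a \<noteq> q b"
      using \<open>a < b\<close> assms by (auto simp: inj_eq)
    ultimately have "q b < q a \<or> (q a = i \<and> q b = Suc i)"
      by (auto simp: simple_apply split: if_splits)
    moreover have "?new = (a, b)" if "q a = i" "q b = Suc i"
      using that inv_f_f[OF assms] by metis
    ultimately show "ab \<in> insert ?new (inversions m q)"
      using ab by (auto simp: inversions_def)
  qed
  then have "card (inversions m (simple i \<circ> q)) \<le> card (insert ?new (inversions m q))"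
    by (simp add: card_mono)
  also have "\<dots> \<le> Suc (card (inversions m q))"
    by (simp add: card_insert_if)
  finally show ?thesis
    by (simp add: len_eq_card_inversions)
qed

lemma len_less_simple_comp:
  assumes "q permutes {1..m}" "1 \<le> i" "i < m" "a < b" "q a = i" "q b = Suc i"
  shows "len m q < len m (simple i \<circ> q)"
proof -
  have "a \<in> {1..m}" "b \<in> {1..m}"
    using assms permutes_not_in[OF assms(1)] by fastforce+
  then have "(a, b) \<in> inversions m (simple i \<circ> q) - inversions m q"
    using assms by (simp add: inversions_def simple_apply)
  moreover have "inversions m q \<subseteq> inversions m (simple i \<circ> q)"
  proof
    fix cd assume "cd \<in> inversions m q"
    moreover have "(q c, q d) \<noteq> (Suc i, i)" if "c < d" for c d
    proof
      assume "(q c, q d) = (Suc i, i)"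
      then have "q c = q b" "q d = q a"
        using assms by auto
      then have "c = b" "d = a"
        using permutes_inj[OF assms(1)] by (auto dest: injD)
      then show False
        using \<open>c < d\<close> \<open>a < b\<close> by simp
    qed
    ultimately show "cd \<in> inversions m (simple i \<circ> q)"
      by (auto simp: inversions_def simple_apply less_Suc_eq)
  qed
  ultimately have "card (inversions m q) < card (inversions m (simple i \<circ> q))"
    by (intro psubset_card_mono) auto
  then show ?thesis
    by (simp add: len_eq_card_inversions)
qed

lemma FPF_permutes: "z \<in> FPF m \<Longrightarrow> z permutes {1..m}"
  by (simp add: FPF_def)

lemma FPF_involution: "z \<in> FPF m \<Longrightarrow> z (z x) = x"
  by (simp add: FPF_def pointfree_idE)

lemma FPF_no_fixpoint: "z \<in> FPF m \<Longrightarrow> x \<in> {1..m} \<Longrightarrow> z x \<noteq> x"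
  by (simp add: FPF_def)

lemma FPF_conj:
  assumes "z \<in> FPF m" "p permutes {1..m}"
  shows "p \<circ> z \<circ> inv p \<in> FPF m"
proof -
  have "p \<circ> z \<circ> inv p permutes {1..m}"
    using assms by (meson FPF_permutes permutes_compose permutes_inv)
  moreover have "p (z (inv p x)) \<noteq> x" if "x \<in> {1..m}" for x
    using FPF_no_fixpoint[OF assms(1), of "inv p x"] that permutes_in_image[OF permutes_inv[OF assms(2)]]
    by (metis assms(2) permutes_inverses(2))
  ultimately show ?thesis
    using FPF_involution[OF assms(1)] permutes_inverses[OF assms(2)] by (simp add: FPF_def fun_eq_iff)
qed

lemma FPF_conj_simple:
  assumes "z \<in> FPF m" "1 \<le> i" "i < m"
  shows "simple i \<circ> z \<circ> simple i \<in> FPF m"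
  using FPF_conj[OF assms(1) simple_permutes[OF assms(2,3)]] by (simp add: simple_def)

lemma len_conj_simple_le:
  assumes "z \<in> FPF m" "1 \<le> i" "i < m" "z (Suc i) < z i"
  shows "len m (simple i \<circ> z \<circ> simple i) \<le> len m z"
proof -
  have "inj (z \<circ> simple i)"
    using permutes_inj[OF FPF_permutes[OF assms(1)]] inj_simple by (rule inj_compose)
  then have "len m (simple i \<circ> (z \<circ> simple i)) \<le> Suc (len m (z \<circ> simple i))"
    by (rule len_simple_comp_le)
  also have "\<dots> \<le> len m z"
    using len_comp_simple_less[OF assms(2-4)] by simp
  finally show ?thesis
    by (simp add: comp_assoc)
qed

lemma len_less_conj_simple:
  assumes "z \<in> FPF m" "1 \<le> i" "i < m" "z i < z (Suc i)"
  shows "len m z < len m (simple i \<circ> z \<circ> simple i)"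
proof -
  let ?q = "z \<circ> simple i"
  have "len m (?q \<circ> simple i) < len m ?q"
    using assms by (intro len_comp_simple_less) (simp_all add: simple_apply)
  then have "len m z < len m ?q"
    by (simp add: comp_assoc)
  \<comment> \<open>the positions of \<open>i\<close> and \<open>Suc i\<close> in \<open>?q\<close> are \<open>z i\<close> and \<open>z (Suc i)\<close>, which \<open>simple i\<close> fixes\<close>
  moreover have "z i \<notin> {i, Suc i}" "z (Suc i) \<notin> {i, Suc i}"
    using assms FPF_no_fixpoint[OF assms(1), of i] FPF_no_fixpoint[OF assms(1), of "Suc i"]
      FPF_involution[OF assms(1), of i] FPF_involution[OF assms(1), of "Suc i"]
    by auto
  then have "len m ?q < len m (simple i \<circ> ?q)"
    using assms FPF_involution[OF assms(1)]
    by (intro len_less_simple_comp[where a = "z i" and b = "z (Suc i)"]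
        permutes_compose simple_permutes FPF_permutes) (auto simp: simple_apply)
  ultimately show ?thesis
    by (simp add: comp_assoc)
qed

lemma bruhat_le_imp_len_le: "bruhat_le m y z \<Longrightarrow> len m y \<le> len m z"
  unfolding bruhat_le_def
proof (elim conjE)
  assume "(bruhat_step m)\<^sup>*\<^sup>* y z"
  then show "len m y \<le> len m z"
    by (induction rule: rtranclp_induct) (auto simp: bruhat_step_def intro: le_trans)
qed

lemma bruhat_le_conj_simple:
  assumes "z \<in> FPF m" "1 \<le> i" "i < m" "z (Suc i) < z i"
  shows "bruhat_le m (simple i \<circ> z \<circ> simple i) z"
proof -
  let ?y = "simple i \<circ> z \<circ> simple i"
  have "z = simple i \<circ> ?y \<circ> simple i"
    by (simp add: fun_eq_iff)
  then have "bruhat_step m ?y z"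
    using assms FPF_conj_simple[OF assms(1-3)] len_conj_simple_le[OF assms]
    unfolding bruhat_step_def simple_def by (intro conjI exI[of _ i] exI[of _ "Suc i"]) auto
  then show ?thesis
    using assms FPF_conj_simple[OF assms(1-3)] by (simp add: bruhat_le_def)
qed

lemma simple_in_tau_iff:
  assumes "z \<in> FPF m" "1 \<le> i" "i < m"
  shows "simple i \<in> tau m z \<longleftrightarrow> z (Suc i) < z i"
proof
  assume "simple i \<in> tau m z"
  then have "bruhat_le m (simple i \<circ> z \<circ> simple i) z"
    using injD[OF inj_simple_index] by (auto simp: tau_def)
  then have "\<not> len m z < len m (simple i \<circ> z \<circ> simple i)"
    using bruhat_le_imp_len_le by (simp add: not_less)
  moreover have "z i \<noteq> z (Suc i)"
    using permutes_inj[OF FPF_permutes[OF assms(1)]] by (simp add: inj_eq)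
  ultimately show "z (Suc i) < z i"
    using len_less_conj_simple[OF assms] by (meson linorder_neqE_nat)
next
  assume "z (Suc i) < z i"
  then show "simple i \<in> tau m z"
    using assms bruhat_le_conj_simple unfolding tau_def by blast
qed

lemma tau_eq_simple_descents:
  assumes "z \<in> FPF m"
  shows "tau m z = simple ` {i. 1 \<le> i \<and> i < m \<and> z (Suc i) < z i}"
  using simple_in_tau_iff[OF assms] unfolding tau_def by blast

definition half_shift :: "nat \<Rightarrow> nat \<Rightarrow> nat" where
  "half_shift k x = (if 1 \<le> x \<and> x \<le> k then x + k else if k < x \<and> x \<le> 2 * k then x - k else x)"

lemma half_shift_FPF: "half_shift k \<in> FPF (2 * k)"
proof -
  have "half_shift k (half_shift k x) = x" for x
    by (simp add: half_shift_def) linarith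
  moreover have "half_shift k permutes {1..2 * k}"
    using calculation by (rule permutes_involutionI) (auto simp: half_shift_def)
  ultimately show ?thesis
    by (auto simp: FPF_def fun_eq_iff half_shift_def)
qed

lemma half_shift_descent_iff:
  assumes "1 \<le> i" "i < 2 * k"
  shows "half_shift k (Suc i) < half_shift k i \<longleftrightarrow> i = k"
  using assms by (auto simp: half_shift_def)

lemma FPF_eq_half_shiftI:
  assumes "z \<in> FPF (2 * k)" "\<And>a. 1 \<le> a \<Longrightarrow> a \<le> k \<Longrightarrow> z a = a + k"
  shows "z = half_shift k"
proof
  fix x
  consider "1 \<le> x \<and> x \<le> k" | "k < x \<and> x \<le> 2 * k" | "x \<notin> {1..2 * k}"
    by fastforce
  then show "z x = half_shift k x"
  proof cases
    case 1
    then show ?thesis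
      using assms(2) by (simp add: half_shift_def)
  next
    case 2
    have "z (x - k) = x"
      using 2 assms(2)[of "x - k"] by auto
    then have "z x = x - k"
      using FPF_involution[OF assms(1)] by metis
    then show ?thesis
      using 2 by (simp add: half_shift_def)
  next
    case 3
    then show ?thesis
      using permutes_not_in[OF FPF_permutes[OF assms(1)]] by (auto simp: half_shift_def)
  qed
qed

lemma stepwise_increasing_add_le:
  fixes f :: "nat \<Rightarrow> nat"
  assumes "\<And>i. a \<le> i \<Longrightarrow> i < b \<Longrightarrow> f i < f (Suc i)" "a \<le> b"
  shows "f a + (b - a) \<le> f b"
  using assms(2)
proof (induction rule: dec_induct)
  case (step n)
  then show ?case
    using assms(1)[of n] by simp
qed simp

lemma FPF_increasing_lower_half_apply:
  assumes "z \<in> FPF (2 * k)" "\<And>i. 1 \<le> i \<Longrightarrow> i < k \<Longrightarrow> z i < z (Suc i)" "1 \<le> a" "a \<le> k"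
  shows "z a = a + k"
proof -
  have gap: "z a + (b - a) \<le> z b" if "1 \<le> a" "a \<le> b" "b \<le> k" for a b
    using assms(2) that by (intro stepwise_increasing_add_le) auto
  have range: "1 \<le> z x \<and> z x \<le> 2 * k" if "1 \<le> x" "x \<le> 2 * k" for x
    using permutes_in_image[OF FPF_permutes[OF assms(1)], of x] that by simp
  have upper: "k < z b" if "1 \<le> b" "b \<le> k" for b
  proof (rule ccontr)
    assume "\<not> k < z b"
    then have "1 \<le> z b" "z b \<le> k"
      using range that by auto
    moreover have "z b \<noteq> b" "z (z b) = b"
      using that FPF_no_fixpoint[OF assms(1)] FPF_involution[OF assms(1)] by auto
    ultimately show False
      using gap[of b "z b"] gap[of "z b" b] that by (cases "b < z b") auto
  qed
  have "z 1 + (a - 1) \<le> z a" "z a + (k - a) \<le> z k"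
    using gap assms(3,4) by auto
  moreover have "k < z 1" "z k \<le> 2 * k"
    using upper range assms(3,4) by auto
  ultimately show ?thesis
    using assms(3,4) by linarith
qed

lemma tau_eq_singleton_iff:
  assumes "1 \<le> k" "z \<in> FPF (2 * k)"
  shows "tau (2 * k) z = {simple k} \<longleftrightarrow> z = half_shift k"
proof -
  let ?D = "\<lambda>z. {i. 1 \<le> i \<and> i < 2 * k \<and> z (Suc i) < z i}"
  have "tau (2 * k) z = {simple k} \<longleftrightarrow> ?D z = {k}"
    using tau_eq_simple_descents[OF assms(2)] inj_image_eq_iff[OF inj_simple_index, of _ "{k}"]
    by simp
  also have "\<dots> \<longleftrightarrow> z = half_shift k"
  proof
    assume D: "?D z = {k}"
    have "z i < z (Suc i)" if "1 \<le> i" "i < k" for i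
    proof -
      have "i \<notin> ?D z"
        using D that by simp
      then have "\<not> z (Suc i) < z i"
        using that by simp
      moreover have "z i \<noteq> z (Suc i)"
        using permutes_inj[OF FPF_permutes[OF assms(2)]] by (simp add: inj_eq)
      ultimately show ?thesis
        by simp
    qed
    then show "z = half_shift k"
      by (intro FPF_eq_half_shiftI[OF assms(2)] FPF_increasing_lower_half_apply[OF assms(2)])
  next
    assume "z = half_shift k"
    then show "?D z = {k}"
      using half_shift_descent_iff[of _ k] assms(1) by auto
  qed
  finally show ?thesis .
qed

lemma w0_w0 [simp]: "w0 n (w0 n x) = x"
  by (auto simp: w0_def)

lemma w0_permutes: "w0 n permutes {1..n}"
  by (rule permutes_involutionI) (auto simp: w0_def)

lemma inv_w0: "inv (w0 n) = w0 n"
  by (rule inv_unique_comp) (simp_all add: fun_eq_iff)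

lemma FPF_comp_simple:
  assumes "z \<in> FPF m"
  shows "z \<circ> simple (Suc m) \<in> FPF (Suc (Suc m))"
proof -
  have z_out: "z x = x" if "x \<notin> {1..m}" for x
    using permutes_not_in[OF FPF_permutes[OF assms]] that .
  have z_in: "z x \<in> {1..m}" if "x \<in> {1..m}" for x
    using permutes_in_image[OF FPF_permutes[OF assms]] that by simp
  have apply_eq: "(z \<circ> simple (Suc m)) x = (if x \<in> {1..m} then z x else simple (Suc m) x)" for x
    using z_out by (auto simp: simple_apply)
  have "z \<circ> simple (Suc m) permutes {1..Suc (Suc m)}"
  proof (rule permutes_compose)
    show "simple (Suc m) permutes {1..Suc (Suc m)}"
      by (rule simple_permutes) simp_all
    show "z permutes {1..Suc (Suc m)}"
      using FPF_permutes[OF assms] by (rule permutes_subset) auto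
  qed
  moreover have "(z \<circ> simple (Suc m)) ((z \<circ> simple (Suc m)) x) = x" for x
    using z_in[of x] FPF_involution[OF assms] by (simp only: apply_eq) (auto simp: simple_apply)
  moreover have "(z \<circ> simple (Suc m)) x \<noteq> x" if "x \<in> {1..Suc (Suc m)}" for x
    using that FPF_no_fixpoint[OF assms] by (simp only: apply_eq) (auto simp: simple_apply)
  ultimately show ?thesis
    by (simp add: FPF_def fun_eq_iff)
qed

lemma rho_FPF:
  assumes "2 \<le> n" "z \<in> FPF (n - 2)"
  shows "rho n z \<in> FPF n"
proof -
  have "z \<circ> simple (Suc (n - 2)) \<in> FPF (Suc (Suc (n - 2)))"
    using assms(2) by (rule FPF_comp_simple)
  then have "z \<circ> simple (n - 1) \<in> FPF n"
    using assms(1) by (simp add: Suc_diff_Suc numeral_2_eq_2)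
  from FPF_conj[OF this w0_permutes] show ?thesis
    by (simp add: rho_def inv_w0 comp_assoc)
qed

lemma sigma_apply: "sigma j x = (if x = 1 then Suc j else if 2 \<le> x \<and> x \<le> Suc j then x - 1 else x)"
  by (induction j arbitrary: x) (auto simp: simple_apply)

lemma sigma_permutes: "sigma j permutes {1..Suc j}"
proof (induction j)
  case (Suc j)
  have "simple (Suc j) permutes {1..Suc (Suc j)}"
    by (rule simple_permutes) simp_all
  moreover have "sigma j permutes {1..Suc (Suc j)}"
    using Suc by (rule permutes_subset) auto
  ultimately show ?case
    unfolding sigma.simps by (rule permutes_compose[rotated])
qed (simp only: sigma.simps permutes_id)

lemma nu_FPF:
  assumes "j < m" "z \<in> FPF m"
  shows "nu j z \<in> FPF m"
proof -
  have "sigma j permutes {1..m}"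
    using sigma_permutes by (rule permutes_subset) (use assms(1) in auto)
  from FPF_conj[OF assms(2) this] show ?thesis
    by (simp add: nu_def)
qed

lemma nu_rho_half_shift_apply:
  assumes "2 \<le> k" "1 \<le> a" "a \<le> k"
  shows "nu k (rho (2 * k) (half_shift (k - 1))) a = a + k"
proof -
  have "inv (sigma k) a = Suc a"
    using assms by (simp add: permutes_inv_eq[OF sigma_permutes] sigma_apply)
  moreover have "rho (2 * k) (half_shift (k - 1)) (Suc a) = (if a = 1 then 1 else a + k)"
  proof (cases "a = 1")
    case True
    have "rho (2 * k) (half_shift (k - 1)) (Suc a) =
        w0 (2 * k) (half_shift (k - 1) (simple (2 * k - 1) (2 * k - 1)))"
      using True assms by (simp add: rho_def w0_def)
    also have "\<dots> = w0 (2 * k) (half_shift (k - 1) (2 * k))"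
      using assms by (simp add: simple_apply)
    also have "\<dots> = 1"
      using assms by (simp add: half_shift_def w0_def)
    finally show ?thesis
      using True by simp
  next
    case False
    have "rho (2 * k) (half_shift (k - 1)) (Suc a) =
        w0 (2 * k) (half_shift (k - 1) (simple (2 * k - 1) (2 * k - a)))"
      using assms by (simp add: rho_def w0_def)
    also have "\<dots> = w0 (2 * k) (half_shift (k - 1) (2 * k - a))"
      using False assms by (auto simp: simple_apply)
    also have "\<dots> = w0 (2 * k) (Suc k - a)"
      using False assms by (auto simp: half_shift_def)
    also have "\<dots> = a + k"
      using assms by (auto simp: w0_def)
    finally show ?thesis
      using False by simp
  qed
  ultimately show ?thesis
    using assms by (simp add: nu_def sigma_apply)
qed

lemma nu_rho_half_shift:
  assumes "2 \<le> k"
  shows "nu k (rho (2 * k) (half_shift (k - 1))) = half_shift k"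
proof (rule FPF_eq_half_shiftI)
  have "half_shift (k - 1) \<in> FPF (2 * k - 2)"
    using half_shift_FPF[of "k - 1"] by (simp add: right_diff_distrib')
  then show "nu k (rho (2 * k) (half_shift (k - 1))) \<in> FPF (2 * k)"
    using assms by (intro nu_FPF rho_FPF) auto
qed (use assms nu_rho_half_shift_apply in auto)

theorem proposition6p5:
  shows "(\<forall>n::nat. even n \<and> 2 \<le> n \<longrightarrow>
            (\<exists>!w. w \<in> FPF n \<and> tau n w = {simple (n div 2)})) \<and>
         (\<forall>n::nat. even n \<and> 4 \<le> n \<longrightarrow>
            (\<forall>w w'. w \<in> FPF n \<and> tau n w = {simple (n div 2)} \<and>
                    w' \<in> FPF (n - 2) \<and> tau (n - 2) w' = {simple ((n - 2) div 2)} \<longrightarrow>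
                    w = nu (n div 2) (rho n w')))"
proof (intro conjI allI impI)
  fix n :: nat
  assume "even n \<and> 2 \<le> n"
  then obtain k where n: "n = 2 * k" "1 \<le> k"
    by (auto elim: evenE)
  then have "w \<in> FPF n \<and> tau n w = {simple (n div 2)} \<longleftrightarrow> w = half_shift k" for w
    using tau_eq_singleton_iff[OF n(2)] half_shift_FPF by auto
  then show "\<exists>!w. w \<in> FPF n \<and> tau n w = {simple (n div 2)}"
    by auto
next
  fix n :: nat and w w'
  assume "even n \<and> 4 \<le> n"
  then obtain k where n: "n = 2 * k" "2 \<le> k"
    by (auto elim: evenE)
  then have n2: "n - 2 = 2 * (k - 1)" "(n - 2) div 2 = k - 1"
    by auto
  assume "w \<in> FPF n \<and> tau n w = {simple (n div 2)} \<and>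
    w' \<in> FPF (n - 2) \<and> tau (n - 2) w' = {simple ((n - 2) div 2)}"
  then have "w = half_shift k" "w' = half_shift (k - 1)"
    using tau_eq_singleton_iff n n2 by auto
  then show "w = nu (n div 2) (rho n w')"
    using nu_rho_half_shift[OF n(2)] n by simp
qed

end
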